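(* Let $v,a,b,c\in\mathbb{C}$ with $a\neq0$, $b\neq0$, $v\neq 1$, $\Re(v)<3$, $\Re(c)>0$, and $\Re(vc+a+b)>0$, $\Re(vc+a-b)>0$, $\Re(vc-a+b)>0$, $\Re(vc-a-b)>0$. Put $\sigma_3=\frac v2-\frac{a}{2c}-\frac{b}{2c}$, $\sigma_4=\frac v2-\frac{a}{2c}+\frac{b}{2c}$, $\sigma_5=\frac v2+\frac{a}{2c}+\frac{b}{2c}$, $\sigma_6=\frac v2+\frac{a}{2c}-\frac{b}{2c}$, and $P=(vc-a-b)(vc+a+b)(vc-a+b)(vc+a-b)$. Assume $\frac v2\notin\mathbb{Z}_0^-$ and $1+\sigma_j\notin\mathbb{Z}_0^-$ for $j=3,4,5,6$. Then $$ {}_6F_5\!\left(\begin{matrix}v,\ 1+\frac v2,\ \sigma_3,\ \sigma_5,\ \sigma_4,\ \sigma_6\\ \frac v2,\ 1+\sigma_3,\ 1+\sigma_5,\ 1+\sigma_4,\ 1+\sigma_6\end{matrix};\,1\right) =\frac{P}{16\,v\,a\,b\,c^{2}\,\Gamma(v)}\left[\Gamma(\sigma_5)\Gamma(\sigma_3)\frac{\cos\!\big(\frac{(a+b)\pi}{2c}\big)}{\cos(\frac{v\pi}{2})}-\Gamma(\sigma_6)\Gamma(\sigma_4)\frac{\cos\!\big(\frac{(a-b)\pi}{2c}\big)}{\cos(\frac{v\pi}{2})}\right]. $$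
   Context: $\mathbb{Z}_0^-=\{0,-1,-2,\dots\}$. The Pochhammer symbol is $(\lambda)_0=1$, $(\lambda)_n=\lambda(\lambda+1)\cdots(\lambda+n-1)$ for $n\ge1$. The generalized hypergeometric series is ${}_pF_q\!\left(\begin{matrix}\alpha_1,\dots,\alpha_p\\ \beta_1,\dots,\beta_q\end{matrix};z\right)=\sum_{n=0}^\infty\frac{(\alpha_1)_n\cdots(\alpha_p)_n}{(\beta_1)_n\cdots(\beta_q)_n}\frac{z^n}{n!}$ (with no $\beta_j\in\mathbb{Z}_0^-$); when $p=q+1$ and $z=1$ it converges if $\Re(\sum\beta_j-\sum\alpha_i)>0$. $\Gamma$ is Euler's gamma function. *)

theory Defs
  imports "HOL-Analysis.Analysis"
begin

definition hyp_term :: "complex list \<Rightarrow> complex list \<Rightarrow> complex \<Rightarrow> nat \<Rightarrow> complex" where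
  "hyp_term as bs z n =
     (\<Prod>a\<leftarrow>as. pochhammer a n) / (\<Prod>b\<leftarrow>bs. pochhammer b n) * z ^ n / of_nat (fact n)"

definition hypergeom :: "complex list \<Rightarrow> complex list \<Rightarrow> complex \<Rightarrow> complex" where
  "hypergeom as bs z = (\<Sum>n. hyp_term as bs z n)"

end

(*
  Write w\<^sub>1 = (a + b)/(2c) and w\<^sub>2 = (a - b)/(2c), so that \<sigma>\<^sub>3, \<sigma>\<^sub>5 = v/2 \<minusplus> w\<^sub>1 and
  \<sigma>\<^sub>4, \<sigma>\<^sub>6 = v/2 \<minusplus> w\<^sub>2. Up to the constant \<sigma>\<^sub>3\<sigma>\<^sub>4\<sigma>\<^sub>5\<sigma>\<^sub>6 / (v (w\<^sub>2\<^sup>2 - w\<^sub>1\<^sup>2)), the n-th term of the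
  6F5 series is (v)\<^sub>n/n! times 1/(n + \<sigma>\<^sub>4) + 1/(n + \<sigma>\<^sub>6) - 1/(n + \<sigma>\<^sub>3) - 1/(n + \<sigma>\<^sub>5).
  For Re v < 1 each series \<Sum> (v)\<^sub>n/n! / (n + s) is the Gauss series 2F1(v, s; s + 1; 1), which
  Gauss's summation theorem evaluates as the Beta value B(s, 1 - v); the reflection formula
  combines the two values at s = v/2 \<minusplus> w into \<Gamma>(v/2 - w) \<Gamma>(v/2 + w) cos(\<pi>w) / (\<Gamma>(v) cos(\<pi>v/2)).
  Both sides are holomorphic in v on the half-plane Re v < 3 minus countably many points, so the
  identity continues analytically to the whole range.

  Gauss's theorem itself follows from the contiguous relation
  c (c - a - b) F(c) = (c - a)(c - b) F(c + 1), iterated m times, together with F(c + m) \<rightarrow> 1.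
*)

theory Submission
  imports Defs "HOL-Complex_Analysis.Complex_Analysis"
begin

section \<open>Gauss's summation theorem\<close>

lemma add_of_nat_notin_nonpos_Ints:
  fixes c :: "'a :: ring_char_0"
  assumes "c \<notin> \<int>\<^sub>\<le>\<^sub>0"
  shows "c + of_nat k \<notin> \<int>\<^sub>\<le>\<^sub>0"
  using nonpos_Ints_diff_Nats[of "c + of_nat k" "of_nat k"] assms by auto

lemma add_of_nat_neq_0:
  fixes c :: "'a :: ring_char_0"
  shows "c \<notin> \<int>\<^sub>\<le>\<^sub>0 \<Longrightarrow> c + of_nat k \<noteq> 0"
  using add_of_nat_notin_nonpos_Ints[of c k] by auto

lemma pochhammer_neq_0:
  fixes c :: "'a :: {real_normed_field, field_char_0}"
  shows "c \<notin> \<int>\<^sub>\<le>\<^sub>0 \<Longrightarrow> pochhammer c n \<noteq> 0"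
  using pochhammer_eq_0_imp_nonpos_Int by blast

lemma Re_pos_notin_nonpos_Ints: "Re z > 0 \<Longrightarrow> z \<notin> \<int>\<^sub>\<le>\<^sub>0"
  by (auto elim!: nonpos_Ints_cases)

lemma pochhammer_one_plus:
  fixes x :: complex
  assumes "x \<noteq> 0"
  shows "pochhammer (1 + x) n = pochhammer x n * (x + of_nat n) / x"
  using pochhammer_rec[of x n] pochhammer_Suc[of x n] assms
  by (simp add: field_simps)

definition gauss_term :: "complex \<Rightarrow> complex \<Rightarrow> complex \<Rightarrow> nat \<Rightarrow> complex" where
  "gauss_term a b c n = pochhammer a n * pochhammer b n / (fact n * pochhammer c n)"

lemma gauss_term_Suc:
  assumes "c \<notin> \<int>\<^sub>\<le>\<^sub>0"
  shows "gauss_term a b c (Suc n) =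
           gauss_term a b c n * (a + of_nat n) * (b + of_nat n) / ((of_nat n + 1) * (c + of_nat n))"
  using pochhammer_neq_0[OF assms, of n] add_of_nat_neq_0[OF assms, of n]
  by (simp add: gauss_term_def pochhammer_Suc field_simps)

lemma gauss_term_plus_1:
  assumes "c \<notin> \<int>\<^sub>\<le>\<^sub>0"
  shows "gauss_term a b (c + 1) n = gauss_term a b c n * c / (c + of_nat n)"
proof -
  have "c \<noteq> 0" using assms by auto
  then show ?thesis
    unfolding gauss_term_def add.commute[of c 1] pochhammer_one_plus[OF \<open>c \<noteq> 0\<close>]
    using pochhammer_neq_0[OF assms, of n] add_of_nat_neq_0[OF assms, of n]
    by (simp add: field_simps)
qed

lemma gauss_term_asymptotics:
  assumes "c \<notin> \<int>\<^sub>\<le>\<^sub>0"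
  shows "(\<lambda>n. of_nat (Suc n) * gauss_term a b c (Suc n) / exp ((a + b - c) * of_real (ln (real n))))
           \<longlonglongrightarrow> rGamma a * rGamma b / rGamma c"
proof -
  have "rGamma c \<noteq> 0" using assms by (simp add: rGamma_eq_zero_iff)
  then have "(\<lambda>n. rGamma_series a n * rGamma_series b n / rGamma_series c n)
               \<longlonglongrightarrow> rGamma a * rGamma b / rGamma c"
    by (intro tendsto_intros)
  moreover have "rGamma_series a n * rGamma_series b n / rGamma_series c n =
      of_nat (Suc n) * gauss_term a b c (Suc n) / exp ((a + b - c) * of_real (ln (real n)))" for n
    using pochhammer_neq_0[OF assms, of "Suc n"]
    by (simp add: rGamma_series_def gauss_term_def exp_diff exp_add field_simps del: of_nat_Suc)
  ultimately show ?thesis by simp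
qed

lemma gauss_term_bound:
  assumes "c \<notin> \<int>\<^sub>\<le>\<^sub>0"
  obtains M where "eventually (\<lambda>n. norm (of_nat (Suc n) * gauss_term a b c (Suc n))
                       \<le> M * real n powr Re (a + b - c)) sequentially"
proof -
  define L where "L = rGamma a * rGamma b / rGamma c"
  have "eventually (\<lambda>n. norm (of_nat (Suc n) * gauss_term a b c (Suc n)
          / exp ((a + b - c) * of_real (ln (real n)))) < norm L + 1) sequentially"
    using order_tendstoD(2)[OF tendsto_norm[OF gauss_term_asymptotics[OF assms]]]
    by (simp add: L_def)
  then have "eventually (\<lambda>n. norm (of_nat (Suc n) * gauss_term a b c (Suc n))
               \<le> (norm L + 1) * real n powr Re (a + b - c)) sequentially"
    using eventually_gt_at_top[of 0]
  proof eventually_elim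
    case (elim n)
    have "norm (exp ((a + b - c) * of_real (ln (real n)))) = real n powr Re (a + b - c)"
      using elim(2) by (simp add: powr_def)
    with elim(1) show ?case
      by (simp add: norm_divide divide_less_eq less_imp_le mult.commute)
  qed
  then show ?thesis by (rule that)
qed

lemma summable_gauss_term:
  assumes "c \<notin> \<int>\<^sub>\<le>\<^sub>0" "Re (c - a - b) > 0"
  shows "summable (gauss_term a b c)"
proof -
  obtain M where M: "eventually (\<lambda>n. norm (of_nat (Suc n) * gauss_term a b c (Suc n))
                       \<le> M * real n powr Re (a + b - c)) sequentially"
    using gauss_term_bound[OF assms(1)] by blast
  have "eventually (\<lambda>n. norm (gauss_term a b c (Suc n)) \<le> M * real n powr (Re (a + b - c) - 1))
          sequentially"
    using M eventually_gt_at_top[of 0]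
  proof eventually_elim
    case (elim n)
    have "real n * norm (gauss_term a b c (Suc n)) \<le> real (Suc n) * norm (gauss_term a b c (Suc n))"
      by (intro mult_right_mono) auto
    also have "\<dots> \<le> M * real n powr Re (a + b - c)"
      using elim(1) by (simp only: norm_mult norm_of_nat)
    finally have "norm (gauss_term a b c (Suc n)) \<le> M * real n powr Re (a + b - c) / real n"
      using elim(2) by (simp add: pos_le_divide_eq mult.commute)
    also have "\<dots> = M * real n powr (Re (a + b - c) - 1)"
      using elim(2) by (simp add: powr_diff)
    finally show ?case .
  qed
  moreover have "summable (\<lambda>n. M * real n powr (Re (a + b - c) - 1))"
    using assms(2) by (intro summable_mult) (simp add: summable_real_powr_iff)
  ultimately have "summable (\<lambda>n. gauss_term a b c (Suc n))"
    by (rule summable_comparison_test_ev)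
  then show ?thesis by (simp add: summable_Suc_iff)
qed

lemma gauss_term_times_index_tendsto_0:
  assumes "c \<notin> \<int>\<^sub>\<le>\<^sub>0" "Re (c - a - b) > 0"
  shows "(\<lambda>n. of_nat n * gauss_term a b c n) \<longlonglongrightarrow> 0"
proof -
  obtain M where M: "eventually (\<lambda>n. norm (of_nat (Suc n) * gauss_term a b c (Suc n))
                       \<le> M * real n powr Re (a + b - c)) sequentially"
    using gauss_term_bound[OF assms(1)] by blast
  have "(\<lambda>n. real n powr Re (a + b - c)) \<longlonglongrightarrow> 0"
    using assms(2) by (intro tendsto_neg_powr filterlim_real_sequentially) auto
  then have "(\<lambda>n. M * real n powr Re (a + b - c)) \<longlonglongrightarrow> 0"
    using tendsto_mult_right_zero by blast
  with M have "(\<lambda>n. of_nat (Suc n) * gauss_term a b c (Suc n)) \<longlonglongrightarrow> 0"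
    by (rule Lim_null_comparison)
  then show ?thesis by (rule LIMSEQ_imp_Suc)
qed

text \<open>The contiguous relation is a telescoping identity for the terms
  \<open>n \<cdot> gauss_term a b c n\<close>, which tend to zero.\<close>
lemma gauss_contiguous:
  assumes "c \<notin> \<int>\<^sub>\<le>\<^sub>0" "Re (c - a - b) > 0"
  shows "c * (c - a - b) * suminf (gauss_term a b c) = (c - a) * (c - b) * suminf (gauss_term a b (c + 1))"
proof -
  define u where "u n = - c * of_nat n * gauss_term a b c n" for n
  have "u \<longlonglongrightarrow> - c * 0"
    unfolding u_def mult.assoc by (intro tendsto_mult tendsto_const gauss_term_times_index_tendsto_0 assms)
  then have "(\<lambda>n. u (Suc n) - u n) sums 0"
    using telescope_sums[of u 0] by (simp add: u_def)
  moreover have "u (Suc n) - u n =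
      c * (c - a - b) * gauss_term a b c n - (c - a) * (c - b) * gauss_term a b (c + 1) n" for n
  proof -
    have "(of_nat n + 1 :: complex) \<noteq> 0"
      by (metis of_nat_Suc of_nat_eq_0_iff nat.distinct(1) add.commute)
    then show ?thesis
      using add_of_nat_neq_0[OF assms(1), of n]
      unfolding u_def gauss_term_Suc[OF assms(1)] gauss_term_plus_1[OF assms(1)]
      by (simp add: divide_simps del: of_nat_Suc) (unfold of_nat_Suc, algebra)
  qed
  moreover have "summable (gauss_term a b (c + 1))"
    using summable_gauss_term[of "c + 1" a b] add_of_nat_notin_nonpos_Ints[OF assms(1), of 1] assms(2)
    by simp
  then have "(\<lambda>n. c * (c - a - b) * gauss_term a b c n - (c - a) * (c - b) * gauss_term a b (c + 1) n)
      sums (c * (c - a - b) * suminf (gauss_term a b c) - (c - a) * (c - b) * suminf (gauss_term a b (c + 1)))"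
    using summable_sums[OF summable_gauss_term[OF assms]] summable_sums by (intro sums_diff sums_mult)
  ultimately show ?thesis
    using sums_unique2 by fastforce
qed

lemma gauss_contiguous_iterate:
  assumes "c \<notin> \<int>\<^sub>\<le>\<^sub>0" "Re (c - a - b) > 0"
  shows "suminf (gauss_term a b c) = pochhammer (c - a) m * pochhammer (c - b) m /
           (pochhammer c m * pochhammer (c - a - b) m) * suminf (gauss_term a b (c + of_nat m))"
proof (induction m)
  case 0
  then show ?case by simp
next
  case (Suc m)
  define c' where "c' = c + of_nat m"
  have c': "c' \<notin> \<int>\<^sub>\<le>\<^sub>0" "Re (c' - a - b) > 0"
    unfolding c'_def using add_of_nat_notin_nonpos_Ints[OF assms(1)] assms(2) by auto
  then have "c' \<noteq> 0" "c' - a - b \<noteq> 0" by auto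
  then have "suminf (gauss_term a b c') = c' * (c' - a - b) * suminf (gauss_term a b c') / (c' * (c' - a - b))"
    by simp
  also have "\<dots> = (c' - a) * (c' - b) / (c' * (c' - a - b)) * suminf (gauss_term a b (c' + 1))"
    unfolding gauss_contiguous[OF c'] by simp
  finally have "suminf (gauss_term a b c') = \<dots>" .
  moreover have "pochhammer c m \<noteq> 0" "pochhammer (c - a - b) m \<noteq> 0"
    using assms by (auto intro!: pochhammer_neq_0 Re_pos_notin_nonpos_Ints)
  ultimately show ?case
    using Suc.IH \<open>c' \<noteq> 0\<close> \<open>c' - a - b \<noteq> 0\<close>
    by (simp add: c'_def pochhammer_Suc field_simps)
qed

lemma pochhammer_ratio_tendsto:
  assumes "c \<notin> \<int>\<^sub>\<le>\<^sub>0" "Re (c - a - b) > 0"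
  shows "(\<lambda>m. pochhammer (c - a) (Suc m) * pochhammer (c - b) (Suc m) /
           (pochhammer c (Suc m) * pochhammer (c - a - b) (Suc m)))
         \<longlonglongrightarrow> rGamma (c - a) * rGamma (c - b) / (rGamma c * rGamma (c - a - b))"
proof -
  have "c - a - b \<notin> \<int>\<^sub>\<le>\<^sub>0" using assms(2) by (rule Re_pos_notin_nonpos_Ints)
  then have "rGamma c * rGamma (c - a - b) \<noteq> 0"
    using assms(1) by (simp add: rGamma_eq_zero_iff)
  then have "(\<lambda>m. rGamma_series (c - a) m * rGamma_series (c - b) m /
                 (rGamma_series c m * rGamma_series (c - a - b) m))
         \<longlonglongrightarrow> rGamma (c - a) * rGamma (c - b) / (rGamma c * rGamma (c - a - b))"
    by (intro tendsto_intros)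
  moreover have "rGamma_series (c - a) m * rGamma_series (c - b) m /
                 (rGamma_series c m * rGamma_series (c - a - b) m) =
      pochhammer (c - a) (Suc m) * pochhammer (c - b) (Suc m) /
           (pochhammer c (Suc m) * pochhammer (c - a - b) (Suc m))" for m
    by (simp add: rGamma_series_def exp_diff exp_add field_simps)
  ultimately show ?thesis by simp
qed

lemma pochhammer_ge_0:
  fixes x :: "'a :: linordered_semidom"
  shows "0 \<le> x \<Longrightarrow> 0 \<le> pochhammer x n"
  by (simp add: pochhammer_prod prod_nonneg)

lemma norm_pochhammer_le:
  fixes z :: "'a :: real_normed_field"
  shows "norm (pochhammer z k) \<le> pochhammer (norm z) k"
proof (induction k)
  case (Suc k)
  have "norm (z + of_nat k) \<le> norm z + of_nat k"
    using norm_triangle_ineq[of z "of_nat k"] by simp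
  then show ?case
    using Suc by (auto simp: pochhammer_Suc norm_mult intro!: mult_mono pochhammer_ge_0)
qed simp

lemma pochhammer_le_norm_pochhammer:
  fixes z :: complex
  assumes "0 \<le> r" "r \<le> Re z"
  shows "pochhammer r k \<le> norm (pochhammer z k)"
proof (induction k)
  case (Suc k)
  have "r + of_nat k \<le> norm (z + of_nat k)"
    using assms complex_Re_le_cmod[of "z + of_nat k"] by simp
  with Suc assms show ?case
    by (auto simp: pochhammer_Suc norm_mult intro!: mult_mono pochhammer_nonneg)
qed simp

lemma pochhammer_ge_self:
  fixes x :: real
  assumes "1 \<le> x" "0 < k"
  shows "x \<le> pochhammer x k"
proof -
  obtain j where "k = Suc j" using assms(2) by (cases k) auto
  have "1 \<le> pochhammer (x + 1) j"
    using assms(1) by (induction j) (auto simp: pochhammer_Suc intro: order_trans[OF _ mult_mono, of 1 1])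
  then show ?thesis
    using assms(1) mult_left_mono[of 1 "pochhammer (x + 1) j" x] by (simp add: \<open>k = Suc j\<close> pochhammer_rec)
qed

lemma gauss_term_shift_tendsto:
  "(\<lambda>m. gauss_term a b (c + of_nat m) k) \<longlonglongrightarrow> (if k = 0 then 1 else 0)"
proof (cases "k = 0")
  case False
  define K where "K = norm (pochhammer a k) * norm (pochhammer b k) / fact k"
  have "eventually (\<lambda>m. norm (gauss_term a b (c + of_nat m) k) \<le> K / (Re c + real m)) sequentially"
    using eventually_ge_at_top[of "nat \<lceil>1 - Re c\<rceil>"]
  proof eventually_elim
    case (elim m)
    then have "1 \<le> Re c + real m" by linarith
    then have "Re c + real m \<le> norm (pochhammer (c + of_nat m) k)"
      using pochhammer_ge_self[of "Re c + real m" k] pochhammer_le_norm_pochhammer[of "Re c + real m" "c + of_nat m" k] False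
      by simp
    with \<open>1 \<le> Re c + real m\<close> show ?case
      by (auto simp: K_def gauss_term_def norm_mult norm_divide intro!: divide_left_mono mult_pos_pos)
  qed
  moreover have "(\<lambda>m. K / (Re c + real m)) \<longlonglongrightarrow> 0"
    by (intro tendsto_divide_0[OF tendsto_const] filterlim_at_top_imp_at_infinity
        filterlim_tendsto_add_at_top[OF tendsto_const] filterlim_real_sequentially)
  ultimately show ?thesis
    using False by (simp add: Lim_null_comparison)
qed (simp add: gauss_term_def)

text \<open>Tannery's theorem, with a Gauss series with real parameters as majorant.\<close>
lemma suminf_gauss_term_shift_tendsto:
  "(\<lambda>m. suminf (gauss_term a b (c + of_nat m))) \<longlonglongrightarrow> 1"
proof -
  define r where "r = norm a + norm b + 1"
  have "0 < r" unfolding r_def by (simp add: add_nonneg_pos)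
  define M where "M k = pochhammer (norm a) k * pochhammer (norm b) k / (fact k * pochhammer r k)" for k
  have "gauss_term (of_real (norm a)) (of_real (norm b)) (of_real r) = (\<lambda>k. of_real (M k))"
    by (simp add: fun_eq_iff gauss_term_def M_def pochhammer_of_real)
  moreover have "summable (gauss_term (of_real (norm a)) (of_real (norm b)) (of_real r))"
    by (intro summable_gauss_term Re_pos_notin_nonpos_Ints) (simp_all add: r_def add_nonneg_pos)
  ultimately have "summable M" by simp
  have "norm (gauss_term a b (c + of_nat m) k) \<le> M k" if "r \<le> Re c + real m" for k m
  proof -
    have "pochhammer r k \<le> norm (pochhammer (c + of_nat m) k)"
      using that by (intro pochhammer_le_norm_pochhammer) (simp_all add: r_def)
    moreover have "0 < pochhammer r k" using \<open>0 < r\<close> by (rule pochhammer_pos)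
    ultimately show ?thesis
      unfolding M_def gauss_term_def norm_divide norm_mult norm_fact
      using \<open>0 < r\<close>
      by (intro frac_le mult_mono mult_left_mono norm_pochhammer_le mult_nonneg_nonneg pochhammer_ge_0) auto
  qed
  then have "eventually (\<lambda>(k, m). norm (gauss_term a b (c + of_nat m) k) \<le> M k) (at_top \<times>\<^sub>F sequentially)"
    unfolding eventually_prod_filter
    by (intro exI[of _ "\<lambda>_. True"] exI[of _ "\<lambda>m. r \<le> Re c + real m"] conjI)
       (auto intro: eventually_mono[OF eventually_ge_at_top[of "nat \<lceil>r - Re c\<rceil>"]])
  from tannerys_theorem[OF gauss_term_shift_tendsto this \<open>summable M\<close>]
  show ?thesis
    using sums_single[of 0 "\<lambda>_. 1::complex"] by (simp add: sums_iff)
qed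

theorem gauss_summation:
  assumes "c \<notin> \<int>\<^sub>\<le>\<^sub>0" "Re (c - a - b) > 0"
  shows "gauss_term a b c sums (rGamma (c - a) * rGamma (c - b) / (rGamma c * rGamma (c - a - b)))"
proof -
  have "(\<lambda>m. pochhammer (c - a) (Suc m) * pochhammer (c - b) (Suc m) /
           (pochhammer c (Suc m) * pochhammer (c - a - b) (Suc m))
           * suminf (gauss_term a b (c + of_nat (Suc m))))
      \<longlonglongrightarrow> rGamma (c - a) * rGamma (c - b) / (rGamma c * rGamma (c - a - b)) * 1"
    by (intro tendsto_mult pochhammer_ratio_tendsto assms LIMSEQ_Suc[OF suminf_gauss_term_shift_tendsto])
  then have "(\<lambda>m. suminf (gauss_term a b c))
      \<longlonglongrightarrow> rGamma (c - a) * rGamma (c - b) / (rGamma c * rGamma (c - a - b))"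
    unfolding gauss_contiguous_iterate[OF assms, symmetric] by simp
  then show ?thesis
    using summable_sums[OF summable_gauss_term[OF assms]] by (simp add: LIMSEQ_const_iff)
qed

section \<open>A Beta series and the reflection formula\<close>

definition rising_coeff :: "complex \<Rightarrow> nat \<Rightarrow> complex" where
  "rising_coeff v n = pochhammer v n / fact n"

lemma rising_coeff_div_sums_Beta:
  assumes "s \<notin> \<int>\<^sub>\<le>\<^sub>0" "Re v < 1"
  shows "(\<lambda>n. rising_coeff v n / (of_nat n + s)) sums Beta s (1 - v)"
proof -
  have "s \<noteq> 0" using assms(1) by auto
  have "s + 1 \<notin> \<int>\<^sub>\<le>\<^sub>0" using add_of_nat_notin_nonpos_Ints[OF assms(1), of 1] by simp
  with assms(2) have "(\<lambda>n. gauss_term v s (s + 1) n / s)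
      sums (rGamma (1 + s - v) / (rGamma (s + 1) * rGamma (1 - v)) / s)"
    using gauss_summation[of "s + 1" v s] by (intro sums_divide) (simp add: add_ac)
  moreover have "gauss_term v s (s + 1) n / s = rising_coeff v n / (of_nat n + s)" for n
    unfolding gauss_term_def rising_coeff_def add.commute[of s 1] pochhammer_one_plus[OF \<open>s \<noteq> 0\<close>]
    using pochhammer_neq_0[OF assms(1), of n] add_of_nat_neq_0[OF assms(1), of n] \<open>s \<noteq> 0\<close>
    by (simp add: divide_simps add.commute)
  moreover have "rGamma (1 + s - v) / (rGamma (s + 1) * rGamma (1 - v)) / s = Beta s (1 - v)"
    using rGamma_plus1[of s] by (simp add: Beta_altdef Gamma_def field_simps)
  ultimately show ?thesis by simp
qed

lemma sin_pi_times_eq_0_imp_Ints: "sin (of_real pi * z) = 0 \<Longrightarrow> (z :: complex) \<in> \<int>"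
  by (auto simp: sin_eq_0 field_simps)

lemma cos_pi_half_eq_0_imp_odd:
  fixes z :: complex
  assumes "cos (z * of_real pi / 2) = 0"
  obtains n :: int where "z = 2 * of_int n + 1"
proof -
  obtain n :: int where "z * of_real pi / 2 = of_real (of_int n * pi) + of_real pi / 2"
    using assms by (auto simp: cos_eq_0)
  then have "(z - (2 * of_int n + 1)) * of_real pi = 0" by (simp add: algebra_simps)
  then show ?thesis using that by simp
qed

lemma cos_pi_half_eq_0_imp_Ints: "cos (z * of_real pi / 2) = 0 \<Longrightarrow> (z :: complex) \<in> \<int>"
  by (erule cos_pi_half_eq_0_imp_odd) simp

text \<open>The reflection formula turns the two Beta values into one product of Gamma values times
  \<open>sin (\<pi>(v/2 + w)) + sin (\<pi>(v/2 - w)) = 2 sin (\<pi>v/2) cos (\<pi>w)\<close>.\<close>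
lemma Beta_symmetric_pair:
  fixes v w :: complex
  assumes "v/2 - w \<notin> \<int>\<^sub>\<le>\<^sub>0" "v/2 + w \<notin> \<int>\<^sub>\<le>\<^sub>0" "v \<notin> \<int>"
  shows "Beta (v/2 - w) (1 - v) + Beta (v/2 + w) (1 - v) =
     Gamma (v/2 - w) * Gamma (v/2 + w) * cos (w * of_real pi) * rGamma v / cos (v * of_real pi / 2)"
proof -
  have reflect: "rGamma (1 - z) = Gamma z * sin (of_real pi * z) / of_real pi" if "z \<notin> \<int>\<^sub>\<le>\<^sub>0" for z :: complex
    using rGamma_reflection_complex[of z] that by (simp add: Gamma_def rGamma_eq_zero_iff field_simps)
  have complement: "v/2 - w + (1 - v) = 1 - (v/2 + w)" "v/2 + w + (1 - v) = 1 - (v/2 - w)"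
    by simp_all
  have "sin (of_real pi * v) \<noteq> 0" "cos (v * of_real pi / 2) \<noteq> 0"
    using assms(3) sin_pi_times_eq_0_imp_Ints cos_pi_half_eq_0_imp_Ints by blast+
  moreover from this have "rGamma (1 - v) \<noteq> 0"
    using rGamma_reflection_complex[of v] by auto
  ultimately have Gamma_1_minus: "Gamma (1 - v) = of_real pi * rGamma v / sin (of_real pi * v)"
    using rGamma_reflection_complex[of v] by (simp add: Gamma_def field_simps)
  have "Beta (v/2 - w) (1 - v) + Beta (v/2 + w) (1 - v) = Gamma (1 - v) * Gamma (v/2 - w) *
      Gamma (v/2 + w) * (sin (of_real pi * (v/2 + w)) + sin (of_real pi * (v/2 - w))) / of_real pi"
    unfolding Beta_altdef complement reflect[OF assms(1)] reflect[OF assms(2)] by (simp add: field_simps)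
  also have "sin (of_real pi * (v/2 + w)) + sin (of_real pi * (v/2 - w)) =
      2 * sin (of_real pi * v / 2) * cos (w * of_real pi)"
    unfolding sin_plus_sin by (simp add: algebra_simps)
  also have "sin (of_real pi * v) = 2 * sin (of_real pi * v / 2) * cos (v * of_real pi / 2)"
    using sin_double[of "of_real pi * v / 2"] by (simp add: mult.commute)
  then have "Gamma (1 - v) = of_real pi * rGamma v / (2 * sin (of_real pi * v / 2) * cos (v * of_real pi / 2))"
    unfolding Gamma_1_minus by simp
  finally show ?thesis
    using \<open>sin (of_real pi * v) \<noteq> 0\<close> \<open>cos (v * of_real pi / 2) \<noteq> 0\<close> \<open>sin (of_real pi * v) = _\<close>
    by (simp add: divide_simps)
qed

section \<open>The partial-fraction series and its analytic continuation\<close>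

definition pfrac :: "complex \<Rightarrow> complex \<Rightarrow> complex \<Rightarrow> nat \<Rightarrow> complex" where
  "pfrac w1 w2 v n = 1 / (of_nat n + (v/2 - w2)) + 1 / (of_nat n + (v/2 + w2))
                   - 1 / (of_nat n + (v/2 - w1)) - 1 / (of_nat n + (v/2 + w1))"

definition pfrac_series :: "complex \<Rightarrow> complex \<Rightarrow> complex \<Rightarrow> complex" where
  "pfrac_series w1 w2 v = (\<Sum>n. rising_coeff v n * pfrac w1 w2 v n)"

definition pfrac_closed_form :: "complex \<Rightarrow> complex \<Rightarrow> complex \<Rightarrow> complex" where
  "pfrac_closed_form w1 w2 v =
     (Gamma (v/2 - w2) * Gamma (v/2 + w2) * cos (w2 * of_real pi)
      - Gamma (v/2 - w1) * Gamma (v/2 + w1) * cos (w1 * of_real pi)) * rGamma v / cos (v * of_real pi / 2)"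

lemma pfrac_series_eq_closed_form_Re_lt_1:
  assumes "Re v < 1" "v \<notin> \<int>"
    and "v/2 - w1 \<notin> \<int>\<^sub>\<le>\<^sub>0" "v/2 + w1 \<notin> \<int>\<^sub>\<le>\<^sub>0" "v/2 - w2 \<notin> \<int>\<^sub>\<le>\<^sub>0" "v/2 + w2 \<notin> \<int>\<^sub>\<le>\<^sub>0"
  shows "pfrac_series w1 w2 v = pfrac_closed_form w1 w2 v"
proof -
  have "(\<lambda>n. rising_coeff v n * pfrac w1 w2 v n) sums
      (Beta (v/2 - w2) (1 - v) + Beta (v/2 + w2) (1 - v) - Beta (v/2 - w1) (1 - v) - Beta (v/2 + w1) (1 - v))"
    unfolding pfrac_def right_diff_distrib distrib_left times_divide_eq_right mult_1_right
    by (intro sums_diff sums_add rising_coeff_div_sums_Beta assms)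
  then have "pfrac_series w1 w2 v = (Beta (v/2 - w2) (1 - v) + Beta (v/2 + w2) (1 - v))
      - (Beta (v/2 - w1) (1 - v) + Beta (v/2 + w1) (1 - v))"
    unfolding pfrac_series_def by (simp add: sums_iff)
  also have "\<dots> = pfrac_closed_form w1 w2 v"
    unfolding Beta_symmetric_pair[OF assms(3,4,2)] Beta_symmetric_pair[OF assms(5,6,2)] pfrac_closed_form_def
    by (simp add: diff_divide_distrib left_diff_distrib)
  finally show ?thesis .
qed

lemma rising_coeff_Suc: "rising_coeff v (Suc n) = rising_coeff v n * (1 + (v - 1) / of_real (real n + 1))"
proof -
  have "(of_nat n + 1 :: complex) \<noteq> 0"
    by (metis of_nat_Suc of_nat_eq_0_iff nat.distinct(1) add.commute)
  then show ?thesis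
    by (simp add: rising_coeff_def pochhammer_Suc field_simps)
qed

lemma norm_one_plus_div_le:
  fixes u :: complex and m :: real
  assumes "m > 0"
  shows "norm (1 + u / of_real m) \<le> exp (Re u / m + (norm u)^2 / (2 * m^2))"
proof (rule power2_le_imp_le)
  have "(norm (1 + u / of_real m))^2 = 1 + 2 * (Re u / m + (norm u)^2 / (2 * m^2))"
    unfolding cmod_power2 using assms by (simp add: power2_eq_square field_simps)
  also have "\<dots> \<le> exp (2 * (Re u / m + (norm u)^2 / (2 * m^2)))"
    by (rule exp_ge_add_one_self)
  also have "\<dots> = (exp (Re u / m + (norm u)^2 / (2 * m^2)))^2"
    by (simp add: power2_eq_square exp_add[symmetric])
  finally show "(norm (1 + u / of_real m))^2 \<le> (exp (Re u / m + (norm u)^2 / (2 * m^2)))^2" .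
qed simp

lemma norm_rising_coeff_le_exp_harm:
  assumes "Re v \<le> \<rho>" "norm (v - 1) \<le> R"
  shows "norm (rising_coeff v n) \<le> exp ((\<rho> - 1) * harm n + R^2 / 2 * (\<Sum>k<n. 1 / (real k + 1)^2))"
proof (induction n)
  case 0
  then show ?case by (simp add: rising_coeff_def harm_def)
next
  case (Suc n)
  define m where "m = real n + 1"
  have "m > 0" by (simp add: m_def)
  have "Re (v - 1) / m \<le> (\<rho> - 1) / m"
    using assms(1) \<open>m > 0\<close> by (simp add: divide_right_mono)
  moreover have "(norm (v - 1))^2 / (2 * m^2) \<le> R^2 / 2 * (1 / m^2)"
    using power_mono[OF assms(2), of 2] \<open>m > 0\<close> by (simp add: divide_right_mono)
  ultimately have step: "norm (1 + (v - 1) / of_real m) \<le> exp ((\<rho> - 1) / m + R^2 / 2 * (1 / m^2))"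
    using norm_one_plus_div_le[OF \<open>m > 0\<close>, of "v - 1"] by (elim order_trans) (intro exp_mono add_mono)
  have "norm (rising_coeff v (Suc n)) = norm (rising_coeff v n) * norm (1 + (v - 1) / of_real m)"
    unfolding m_def rising_coeff_Suc norm_mult ..
  also have "\<dots> \<le> exp ((\<rho> - 1) * harm n + R^2 / 2 * (\<Sum>k<n. 1 / (real k + 1)^2))
      * exp ((\<rho> - 1) / m + R^2 / 2 * (1 / m^2))"
    using Suc.IH step by (intro mult_mono) simp_all
  also have "\<dots> = exp ((\<rho> - 1) * harm (Suc n) + R^2 / 2 * (\<Sum>k<Suc n. 1 / (real k + 1)^2))"
  proof -
    have "inverse (real (Suc n)) = 1 / m" by (simp add: m_def divide_inverse)
    then show ?thesis
      unfolding exp_add[symmetric] harm_Suc sum.lessThan_Suc m_def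
      by (simp only: ring_distribs add_divide_distrib diff_divide_distrib) simp
  qed
  finally show ?case .
qed

lemma norm_rising_coeff_le:
  assumes "1 \<le> \<rho>" "Re v \<le> \<rho>" "norm (v - 1) \<le> R" "0 < n"
  shows "norm (rising_coeff v n) \<le> exp (R^2 + \<rho> - 1) * real n powr (\<rho> - 1)"
proof -
  have "(\<lambda>k. 1 / (real k + 1)^2) sums (pi^2 / 6)"
    using inverse_squares_sums by (simp add: add.commute)
  then have "(\<Sum>k<n. 1 / (real k + 1)^2) \<le> (\<Sum>k. 1 / (real k + 1)^2)"
    by (intro sum_le_suminf sums_summable) auto
  also have "\<dots> = pi^2 / 6"
    using \<open>_ sums (pi^2 / 6)\<close> by (rule sums_unique[symmetric])
  also have "\<dots> \<le> 2"
  proof -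
    have "pi \<le> 3.2" using pi_approx(2) by simp
    then have "pi * pi \<le> 3.2 * 3.2" using pi_gt_zero by (intro mult_mono) auto
    then show ?thesis by (simp add: power2_eq_square)
  qed
  finally have "R^2 / 2 * (\<Sum>k<n. 1 / (real k + 1)^2) \<le> R^2 / 2 * 2"
    by (intro mult_left_mono) auto
  moreover have "harm n \<le> 1 + ln (real n)"
    using euler_mascheroni_sequence_decreasing[of 1 n] assms(4) by (simp add: harm_def)
  ultimately have "(\<rho> - 1) * harm n + R^2 / 2 * (\<Sum>k<n. 1 / (real k + 1)^2)
      \<le> (\<rho> - 1) * (1 + ln (real n)) + R^2"
    using assms(1) by (intro add_mono mult_left_mono) auto
  then have "norm (rising_coeff v n) \<le> exp ((\<rho> - 1) * (1 + ln (real n)) + R^2)"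
    using norm_rising_coeff_le_exp_harm[OF assms(2,3), of n] by (elim order_trans) simp
  also have "\<dots> = exp (R^2 + \<rho> - 1) * real n powr (\<rho> - 1)"
    using assms(4) by (simp add: powr_def exp_add[symmetric] algebra_simps)
  finally show ?thesis .
qed

lemma pfrac_eq_rational:
  assumes "x = of_nat n + v/2" "x - w2 \<noteq> 0" "x + w2 \<noteq> 0" "x - w1 \<noteq> 0" "x + w1 \<noteq> 0"
  shows "pfrac w1 w2 v n = 2 * x * (w2^2 - w1^2) / ((x - w2) * (x + w2) * (x - w1) * (x + w1))"
proof -
  have "pfrac w1 w2 v n = 1 / (x - w2) + 1 / (x + w2) - 1 / (x - w1) - 1 / (x + w1)"
    unfolding pfrac_def assms(1) by (simp add: algebra_simps)
  also have "\<dots> = 2 * x * (w2^2 - w1^2) / ((x - w2) * (x + w2) * (x - w1) * (x + w1))"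
    using assms(2-) by (simp add: divide_simps power2_eq_square) (simp add: algebra_simps)
  finally show ?thesis .
qed

lemma norm_pfrac_le:
  assumes "norm v \<le> V" "norm w1 \<le> W" "norm w2 \<le> W" "V + 2 * W + 1 \<le> real n"
  shows "norm (pfrac w1 w2 v n) \<le> 48 * norm (w2^2 - w1^2) * real n powr (-3)"
proof -
  define x where "x = of_nat n + v/2"
  have "0 \<le> V" "0 \<le> W" using assms(1-3) norm_ge_zero order_trans by blast+
  then have "0 < real n" using assms(4) by linarith
  have far: "real n / 2 \<le> norm (x + y)" if "norm y \<le> W" for y
  proof -
    have "norm (v/2 + y) \<le> V / 2 + W"
      using norm_triangle_ineq[of "v/2" y] assms(1) that by simp
    moreover have "real n - norm (v/2 + y) \<le> norm (x + y)"
      using norm_diff_ineq[of "of_nat n" "v/2 + y"] by (simp add: x_def add.assoc)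
    ultimately show ?thesis using assms(4) by linarith
  qed
  have lower: "real n / 2 \<le> norm (x - w2)" "real n / 2 \<le> norm (x + w2)"
       "real n / 2 \<le> norm (x - w1)" "real n / 2 \<le> norm (x + w1)"
    using far[of "- w2"] far[of w2] far[of "- w1"] far[of w1] assms(2,3) by simp_all
  then have "x - w2 \<noteq> 0" "x + w2 \<noteq> 0" "x - w1 \<noteq> 0" "x + w1 \<noteq> 0"
    using \<open>0 < real n\<close> by auto
  then have "norm (pfrac w1 w2 v n) = 2 * norm x * norm (w2^2 - w1^2) /
      (norm (x - w2) * norm (x + w2) * norm (x - w1) * norm (x + w1))"
    by (simp add: pfrac_eq_rational[OF x_def] norm_divide norm_mult)
  also have "\<dots> \<le> 3 * real n * norm (w2^2 - w1^2) /
      (real n / 2 * (real n / 2) * (real n / 2) * (real n / 2))"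
  proof -
    have "2 * norm x \<le> 3 * real n"
      using norm_triangle_ineq[of "of_nat n" "v/2"] assms(1,4) \<open>0 \<le> W\<close> by (simp add: x_def)
    then have "2 * norm x * norm (w2^2 - w1^2) \<le> 3 * real n * norm (w2^2 - w1^2)"
      by (rule mult_right_mono) simp
    moreover have "real n / 2 * (real n / 2) * (real n / 2) * (real n / 2)
        \<le> norm (x - w2) * norm (x + w2) * norm (x - w1) * norm (x + w1)"
      using lower \<open>0 < real n\<close> by (intro mult_mono mult_nonneg_nonneg) simp_all
    ultimately show ?thesis
      using \<open>0 < real n\<close> by (intro frac_le) simp_all
  qed
  also have "\<dots> = 48 * norm (w2^2 - w1^2) * real n powr (-3)"
    using \<open>0 < real n\<close> by (simp add: powr_minus powr_realpow field_simps power3_eq_cube)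
  finally show ?thesis .
qed

lemma norm_rising_coeff_pfrac_le:
  assumes "1 \<le> \<rho>" "Re v \<le> \<rho>" "norm (v - 1) \<le> R"
    and "norm v \<le> V" "norm w1 \<le> W" "norm w2 \<le> W" "V + 2 * W + 1 \<le> real n"
  shows "norm (rising_coeff v n * pfrac w1 w2 v n)
           \<le> exp (R^2 + \<rho> - 1) * (48 * norm (w2^2 - w1^2)) * real n powr (\<rho> - 4)"
proof -
  have "0 \<le> V" "0 \<le> W" using assms(4,5) norm_ge_zero order_trans by blast+
  then have "0 < n" using assms(7) by (cases n) auto
  have "norm (rising_coeff v n) * norm (pfrac w1 w2 v n)
      \<le> (exp (R^2 + \<rho> - 1) * real n powr (\<rho> - 1)) * (48 * norm (w2^2 - w1^2) * real n powr (-3))"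
    using norm_rising_coeff_le[OF assms(1-3) \<open>0 < n\<close>] norm_pfrac_le[OF assms(4-7)]
    by (intro mult_mono) auto
  also have "\<dots> = exp (R^2 + \<rho> - 1) * (48 * norm (w2^2 - w1^2)) * (real n powr (\<rho> - 1) * real n powr (-3))"
    by (simp add: mult_ac)
  also have "real n powr (\<rho> - 1) * real n powr (-3) = real n powr (\<rho> - 4)"
    by (simp add: powr_add[symmetric])
  finally show ?thesis by (simp add: norm_mult)
qed

lemma pfrac_series_terms_locally_dominated:
  assumes "Re z < 3"
  obtains r M where "r > 0" "summable M"
    "eventually (\<lambda>n. \<forall>v\<in>cball z r. norm (rising_coeff v n * pfrac w1 w2 v n) \<le> M n) sequentially"
proof -
  define r where "r = (3 - Re z) / 2"
  define \<rho> where "\<rho> = max 1 ((Re z + 3) / 2)"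
  define R V W where "R = norm (z - 1) + r" and "V = norm z + r" and "W = norm w1 + norm w2"
  define K where "K = exp (R^2 + \<rho> - 1) * (48 * norm (w2^2 - w1^2))"
  have "r > 0" "\<rho> < 3" using assms by (auto simp: r_def \<rho>_def)
  have bound: "norm (rising_coeff v n * pfrac w1 w2 v n) \<le> K * real n powr (\<rho> - 4)"
    if "v \<in> cball z r" "V + 2 * W + 1 \<le> real n" for v n
  proof -
    have "norm (v - z) \<le> r" using that(1) by (simp add: dist_norm norm_minus_commute)
    moreover have "Re v - Re z \<le> norm (v - z)" "norm (v - 1) \<le> norm (v - z) + norm (z - 1)"
        "norm v \<le> norm (v - z) + norm z"
      using complex_Re_le_cmod[of "v - z"] norm_triangle_ineq[of "v - z" "z - 1"]
        norm_triangle_ineq[of "v - z" z] by simp_all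
    ultimately have "Re v \<le> (Re z + 3) / 2 \<and> norm (v - 1) \<le> R \<and> norm v \<le> V"
      unfolding R_def V_def r_def by argo
    moreover have "Re v \<le> (Re z + 3) / 2 \<Longrightarrow> Re v \<le> \<rho>"
      unfolding \<rho>_def by (meson max.coboundedI2)
    ultimately show ?thesis
      unfolding K_def using that(2)
      by (intro norm_rising_coeff_pfrac_le[where W = W]) (auto simp: \<rho>_def W_def)
  qed
  have "eventually (\<lambda>n. \<forall>v\<in>cball z r. norm (rising_coeff v n * pfrac w1 w2 v n)
      \<le> K * real n powr (\<rho> - 4)) sequentially"
    using eventually_ge_at_top[of "nat \<lceil>V + 2 * W + 1\<rceil>"]
  proof eventually_elim
    case (elim n)
    then have "V + 2 * W + 1 \<le> real n" by linarith
    then show ?case using bound by blast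
  qed
  moreover have "summable (\<lambda>n. K * real n powr (\<rho> - 4))"
    using \<open>\<rho> < 3\<close> by (intro summable_mult) (simp add: summable_real_powr_iff)
  ultimately show ?thesis using \<open>r > 0\<close> that by blast
qed

lemma summable_pfrac_series_terms:
  assumes "Re v < 3"
  shows "summable (\<lambda>n. rising_coeff v n * pfrac w1 w2 v n)"
proof -
  obtain r M where "r > 0" "summable M"
    and "eventually (\<lambda>n. \<forall>u\<in>cball v r. norm (rising_coeff u n * pfrac w1 w2 u n) \<le> M n) sequentially"
    using pfrac_series_terms_locally_dominated[OF assms] by blast
  then have "eventually (\<lambda>n. norm (rising_coeff v n * pfrac w1 w2 v n) \<le> M n) sequentially"
    by (elim eventually_mono) simp
  then show ?thesis using \<open>summable M\<close> by (rule summable_comparison_test_ev)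
qed

lemma holomorphic_on_suminf_dominated:
  fixes f :: "nat \<Rightarrow> complex \<Rightarrow> complex"
  assumes "open U" "\<And>n. f n holomorphic_on U"
    and "\<And>z. z \<in> U \<Longrightarrow> \<exists>r>0. \<exists>M. summable M \<and>
            eventually (\<lambda>n. \<forall>v\<in>cball z r. norm (f n v) \<le> M n) sequentially"
  shows "(\<lambda>v. \<Sum>n. f n v) holomorphic_on U"
proof (rule holomorphic_uniform_sequence[OF assms(1)])
  show "(\<lambda>v. \<Sum>i<n. f i v) holomorphic_on U" for n
    by (intro holomorphic_intros assms(2))
  fix z assume "z \<in> U"
  obtain r M where "r > 0" "summable M"
      and M: "eventually (\<lambda>n. \<forall>v\<in>cball z r. norm (f n v) \<le> M n) sequentially"
    using assms(3)[OF \<open>z \<in> U\<close>] by blast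
  obtain e where "e > 0" "cball z e \<subseteq> U"
    using assms(1) \<open>z \<in> U\<close> open_contains_cball by blast
  have "eventually (\<lambda>n. \<forall>v\<in>cball z (min r e). norm (f n v) \<le> M n) sequentially"
    using M by eventually_elim auto
  then have "uniform_limit (cball z (min r e)) (\<lambda>n v. \<Sum>i<n. f i v) (\<lambda>v. \<Sum>n. f n v) sequentially"
    using \<open>summable M\<close> by (rule Weierstrass_m_test_ev)
  then show "\<exists>d>0. cball z d \<subseteq> U \<and> uniform_limit (cball z d) (\<lambda>n v. \<Sum>i<n. f i v) (\<lambda>v. \<Sum>n. f n v) sequentially"
    using \<open>r > 0\<close> \<open>e > 0\<close> \<open>cball z e \<subseteq> U\<close> by (intro exI[of _ "min r e"]) auto
qed

lemma pfrac_series_holomorphic: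
  assumes "open U"
    and "\<And>v. v \<in> U \<Longrightarrow> Re v < 3"
    and "\<And>v. v \<in> U \<Longrightarrow> v/2 - w1 \<notin> \<int>\<^sub>\<le>\<^sub>0" "\<And>v. v \<in> U \<Longrightarrow> v/2 + w1 \<notin> \<int>\<^sub>\<le>\<^sub>0"
    and "\<And>v. v \<in> U \<Longrightarrow> v/2 - w2 \<notin> \<int>\<^sub>\<le>\<^sub>0" "\<And>v. v \<in> U \<Longrightarrow> v/2 + w2 \<notin> \<int>\<^sub>\<le>\<^sub>0"
  shows "pfrac_series w1 w2 holomorphic_on U"
  unfolding pfrac_series_def[abs_def]
proof (rule holomorphic_on_suminf_dominated[OF assms(1)])
  show "(\<lambda>v. rising_coeff v n * pfrac w1 w2 v n) holomorphic_on U" for n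
  proof -
    have nz: "of_nat n + c \<noteq> 0" if "c \<notin> \<int>\<^sub>\<le>\<^sub>0" for c :: complex
      using add_of_nat_neq_0[OF that, of n] by (simp add: add.commute)
    show ?thesis
      unfolding rising_coeff_def pfrac_def by (intro holomorphic_intros nz) (simp_all add: assms(3-6))
  qed
  show "\<exists>r>0. \<exists>M. summable M \<and> eventually (\<lambda>n. \<forall>v\<in>cball z r.
          norm (rising_coeff v n * pfrac w1 w2 v n) \<le> M n) sequentially" if "z \<in> U" for z
  proof -
    have "Re z < 3" using assms(2) that by blast
    then obtain r M where "r > 0" "summable M"
      "eventually (\<lambda>n. \<forall>v\<in>cball z r. norm (rising_coeff v n * pfrac w1 w2 v n) \<le> M n) sequentially"
      by (rule pfrac_series_terms_locally_dominated)
    then show ?thesis by blast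
  qed
qed

lemma countable_vimage_half_plus_Ints: "countable ((\<lambda>u :: complex. u/2 + c) -` \<int>)"
proof -
  have "(\<lambda>u. u/2 + c) -` \<int> = (\<lambda>k. 2 * (k - c)) ` \<int>"
    by (auto simp: image_iff diff_divide_distrib intro!: bexI[of _ "_/2 + c"])
  then show ?thesis by (simp add: countable_int)
qed

lemma halfplane_diff_countable_nonempty:
  fixes T :: "complex set"
  assumes "countable T"
  shows "{u. Re u < b} - T \<noteq> {}"
proof
  assume "{u. Re u < b} - T = {}"
  moreover have "ball (of_real (b - 1)) 1 \<subseteq> {u. Re u < b}"
  proof
    fix u :: complex assume "u \<in> ball (of_real (b - 1)) 1"
    then have "Re (u - of_real (b - 1)) < 1"
      using complex_Re_le_cmod[of "u - of_real (b - 1)"] by (simp add: dist_norm norm_minus_commute)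
    then show "u \<in> {u. Re u < b}" by simp
  qed
  ultimately have "ball (of_real (b - 1)) 1 \<subseteq> T" by blast
  then show False
    using countable_subset[OF _ assms] uncountable_ball[of 1 "of_real (b - 1) :: complex"] by auto
qed

text \<open>By the identity theorem, the equality proved for \<open>Re v < 1\<close> continues to the domain of
  \<open>Re v < 3\<close> with the singular points removed; that domain stays connected because only
  countably many points are removed from a half-plane.\<close>
lemma pfrac_series_eq_closed_form:
  assumes "Re v < 3" "cos (v * of_real pi / 2) \<noteq> 0"
    and "v/2 - w1 \<notin> \<int>\<^sub>\<le>\<^sub>0" "v/2 + w1 \<notin> \<int>\<^sub>\<le>\<^sub>0" "v/2 - w2 \<notin> \<int>\<^sub>\<le>\<^sub>0" "v/2 + w2 \<notin> \<int>\<^sub>\<le>\<^sub>0"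
  shows "pfrac_series w1 w2 v = pfrac_closed_form w1 w2 v"
proof -
  define half_shifts where "half_shifts A = (\<lambda>u. u/2 - w1) -` A \<union> (\<lambda>u. u/2 + w1) -` A
      \<union> (\<lambda>u. u/2 - w2) -` A \<union> (\<lambda>u. u/2 + w2) -` A" for A :: "complex set"
  define U where "U = {u. Re u < 3} - ((\<lambda>u. cos (u * of_real pi / 2)) -` {0} \<union> half_shifts \<int>\<^sub>\<le>\<^sub>0)"
  define S where "S = {u. Re u < 1} - (\<int> \<union> half_shifts \<int>)"
  have closed_half_shifts: "closed (half_shifts A)" if "closed A" for A
    unfolding half_shifts_def using that
    by (intro closed_Un continuous_closed_vimage) (auto intro!: continuous_intros)
  have "countable (half_shifts \<int>)"
    using countable_vimage_half_plus_Ints[of "- w1"] countable_vimage_half_plus_Ints[of w1]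
      countable_vimage_half_plus_Ints[of "- w2"] countable_vimage_half_plus_Ints[of w2]
    by (simp add: half_shifts_def)
  then have countable: "countable (\<int> \<union> half_shifts \<int>)" by (simp add: countable_int)
  have "(\<lambda>u. cos (u * of_real pi / 2)) -` {0} \<union> half_shifts \<int>\<^sub>\<le>\<^sub>0 \<subseteq> \<int> \<union> half_shifts \<int>"
    using cos_pi_half_eq_0_imp_Ints nonpos_Ints_subset_Ints by (fastforce simp: half_shifts_def)
  then have "connected U"
    unfolding U_def using countable
    by (intro connected_open_diff_countable convex_connected convex_halfspace_Re_lt
        open_halfspace_Re_lt) (auto elim: countable_subset)
  have "open U"
    unfolding U_def
    by (intro open_Diff open_halfspace_Re_lt closed_Un closed_half_shifts continuous_closed_vimage)
       (auto intro!: continuous_intros)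
  have "open S"
    unfolding S_def by (intro open_Diff open_halfspace_Re_lt closed_Un closed_half_shifts) auto
  have "S \<noteq> {}"
    unfolding S_def using countable by (rule halfplane_diff_countable_nonempty)
  have "S \<subseteq> U"
    unfolding S_def U_def half_shifts_def
    using cos_pi_half_eq_0_imp_Ints nonpos_Ints_subset_Ints by auto
  have "pfrac_series w1 w2 holomorphic_on U"
    by (rule pfrac_series_holomorphic[OF \<open>open U\<close>]) (auto simp: U_def half_shifts_def)
  moreover have "pfrac_closed_form w1 w2 holomorphic_on U"
    unfolding pfrac_closed_form_def[abs_def]
    by (intro holomorphic_intros) (auto simp: U_def half_shifts_def)
  moreover have "pfrac_series w1 w2 u = pfrac_closed_form w1 w2 u" if "u \<in> S" for u
    using that not_in_Ints_imp_not_in_nonpos_Ints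
    by (intro pfrac_series_eq_closed_form_Re_lt_1) (auto simp: S_def half_shifts_def)
  moreover have "v \<in> U" using assms by (auto simp: U_def half_shifts_def)
  ultimately show ?thesis
    by (rule analytic_continuation_open[OF \<open>open S\<close> \<open>open U\<close> \<open>S \<noteq> {}\<close> \<open>connected U\<close> \<open>S \<subseteq> U\<close>])
qed

section \<open>The very-well-poised 6F5 series\<close>

lemma hyp_term_6F5_eq_pfrac:
  assumes "s3 = v/2 - w1" "s5 = v/2 + w1" "s4 = v/2 - w2" "s6 = v/2 + w2"
    and "v/2 \<notin> \<int>\<^sub>\<le>\<^sub>0" "s3 \<notin> \<int>\<^sub>\<le>\<^sub>0" "s5 \<notin> \<int>\<^sub>\<le>\<^sub>0" "s4 \<notin> \<int>\<^sub>\<le>\<^sub>0" "s6 \<notin> \<int>\<^sub>\<le>\<^sub>0" "w2^2 \<noteq> w1^2"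
  shows "hyp_term [v, 1 + v/2, s3, s5, s4, s6] [v/2, 1 + s3, 1 + s5, 1 + s4, 1 + s6] 1 n =
           s3 * s4 * s5 * s6 / (v * (w2^2 - w1^2)) * (rising_coeff v n * pfrac w1 w2 v n)"
proof -
  define N where "N = (of_nat n :: complex)"
  define D where "D = w2^2 - w1^2"
  define t3 t4 t5 t6 where "t3 = s3 + N" and "t4 = s4 + N" and "t5 = s5 + N" and "t6 = s6 + N"
  have nz: "x \<noteq> 0" "x + N \<noteq> 0" "pochhammer x n \<noteq> 0" if "x \<notin> \<int>\<^sub>\<le>\<^sub>0" for x
    using that add_of_nat_neq_0[OF that, of n] pochhammer_neq_0[OF that, of n] by (auto simp: N_def)
  have nonzero: "v \<noteq> 0" "D \<noteq> 0" "s3 \<noteq> 0" "s4 \<noteq> 0" "s5 \<noteq> 0" "s6 \<noteq> 0"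
      "t3 \<noteq> 0" "t4 \<noteq> 0" "t5 \<noteq> 0" "t6 \<noteq> 0"
    using nz assms(5-10) by (auto simp: D_def t3_def t4_def t5_def t6_def)
  have pf: "pfrac w1 w2 v n = (v + 2 * N) * D / (t4 * t6 * t3 * t5)"
    using pfrac_eq_rational[of "N + v/2" n v w2 w1] nonzero(7-10)
    unfolding N_def D_def t3_def t4_def t5_def t6_def assms(1-4) by (simp add: algebra_simps)
  have ht: "hyp_term [v, 1 + v/2, s3, s5, s4, s6] [v/2, 1 + s3, 1 + s5, 1 + s4, 1 + s6] 1 n =
      rising_coeff v n * ((v + 2 * N) / v) * (s3 / t3) * (s5 / t5) * (s4 / t4) * (s6 / t6)"
    using nz[OF assms(5)] nz[OF assms(6)] nz[OF assms(7)] nz[OF assms(8)] nz[OF assms(9)]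
    unfolding t3_def t4_def t5_def t6_def
    by (simp add: hyp_term_def rising_coeff_def pochhammer_one_plus N_def) (simp add: ac_simps distrib_left)
  show ?thesis
    unfolding D_def[symmetric] ht pf using nonzero by (simp add: field_simps)
qed

lemma hypergeom_6F5_eq_closed_form:
  assumes "s3 = v/2 - w1" "s5 = v/2 + w1" "s4 = v/2 - w2" "s6 = v/2 + w2"
    and "v/2 \<notin> \<int>\<^sub>\<le>\<^sub>0" "s3 \<notin> \<int>\<^sub>\<le>\<^sub>0" "s5 \<notin> \<int>\<^sub>\<le>\<^sub>0" "s4 \<notin> \<int>\<^sub>\<le>\<^sub>0" "s6 \<notin> \<int>\<^sub>\<le>\<^sub>0" "w2^2 \<noteq> w1^2"
    and "Re v < 3" "cos (v * of_real pi / 2) \<noteq> 0"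
  shows "summable (hyp_term [v, 1 + v/2, s3, s5, s4, s6] [v/2, 1 + s3, 1 + s5, 1 + s4, 1 + s6] 1) \<and>
         hypergeom [v, 1 + v/2, s3, s5, s4, s6] [v/2, 1 + s3, 1 + s5, 1 + s4, 1 + s6] 1 =
           s3 * s4 * s5 * s6 / (v * (w2^2 - w1^2)) * pfrac_closed_form w1 w2 v"
proof -
  define K where "K = s3 * s4 * s5 * s6 / (v * (w2^2 - w1^2))"
  have "hyp_term [v, 1 + v/2, s3, s5, s4, s6] [v/2, 1 + s3, 1 + s5, 1 + s4, 1 + s6] 1 =
      (\<lambda>n. K * (rising_coeff v n * pfrac w1 w2 v n))"
    using hyp_term_6F5_eq_pfrac[OF assms(1-10)] by (intro ext) (simp add: K_def)
  moreover have "(\<lambda>n. K * (rising_coeff v n * pfrac w1 w2 v n)) sums (K * pfrac_series w1 w2 v)"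
    unfolding pfrac_series_def by (intro sums_mult summable_sums summable_pfrac_series_terms assms(11))
  moreover have "pfrac_series w1 w2 v = pfrac_closed_form w1 w2 v"
    using assms(6-9) unfolding assms(1-4) by (intro pfrac_series_eq_closed_form assms(11,12))
  ultimately show ?thesis
    by (simp add: hypergeom_def sums_iff K_def)
qed

lemma notin_nonpos_Ints_if_Re_mult_pos:
  fixes c s :: complex
  assumes "0 < Re c" "0 < Re (c * s)"
  shows "s \<notin> \<int>\<^sub>\<le>\<^sub>0"
proof
  assume "s \<in> \<int>\<^sub>\<le>\<^sub>0"
  then obtain m :: nat where "s = - of_nat m" by (elim nonpos_Ints_cases')
  then have "Re (c * s) = - (Re c * real m)" by simp
  moreover have "0 \<le> Re c * real m" using assms(1) by simp
  ultimately show False using assms(2) by linarith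
qed

lemma cos_pi_half_neq_0:
  fixes v c :: complex
  assumes "Re v < 3" "v \<noteq> 1" "0 < Re c" "0 < Re (v * c)"
  shows "cos (v * of_real pi / 2) \<noteq> 0"
proof
  assume "cos (v * of_real pi / 2) = 0"
  then obtain n :: int where v: "v = 2 * of_int n + 1" by (rule cos_pi_half_eq_0_imp_odd)
  then have "0 < (2 * real_of_int n + 1) * Re c" using assms(4) by simp
  then have "0 < 2 * real_of_int n + 1" using assms(3) by (simp add: zero_less_mult_iff)
  moreover have "2 * real_of_int n + 1 < 3" using assms(1) v by simp
  ultimately have "n = 0" by linarith
  then show False using v assms(2) by simp
qed

lemma pfrac_closed_form_rescaled:
  fixes a b c v :: complex
  assumes "a \<noteq> 0" "b \<noteq> 0" "c \<noteq> 0" "v \<noteq> 0" "cos (v * of_real pi / 2) \<noteq> 0"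
    and "w1 = (a + b) / (2 * c)" "w2 = (a - b) / (2 * c)"
  shows "(v/2 - w1) * (v/2 - w2) * (v/2 + w1) * (v/2 + w2) / (v * (w2^2 - w1^2)) * pfrac_closed_form w1 w2 v =
    (v * c - a - b) * (v * c + a + b) * (v * c - a + b) * (v * c + a - b) / (16 * v * a * b * c^2 * Gamma v) *
      (Gamma (v/2 + w1) * Gamma (v/2 - w1) * cos ((a + b) * of_real pi / (2*c)) / cos (v * of_real pi / 2)
       - Gamma (v/2 + w2) * Gamma (v/2 - w2) * cos ((a - b) * of_real pi / (2*c)) / cos (v * of_real pi / 2))"
proof -
  define s3 s4 s5 s6 where "s3 = v/2 - w1" and "s4 = v/2 - w2" and "s5 = v/2 + w1" and "s6 = v/2 + w2"
  define C1 C2 k where "C1 = cos ((a + b) * of_real pi / (2*c))" and "C2 = cos ((a - b) * of_real pi / (2*c))"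
    and "k = cos (v * of_real pi / 2)"
  have "w1 * of_real pi = (a + b) * of_real pi / (2*c)" "w2 * of_real pi = (a - b) * of_real pi / (2*c)"
    by (simp_all add: assms(6,7))
  then have closed: "pfrac_closed_form w1 w2 v = (Gamma s4 * Gamma s6 * C2 - Gamma s3 * Gamma s5 * C1) * inverse (Gamma v) / k"
    unfolding pfrac_closed_form_def s3_def s4_def s5_def s6_def C1_def C2_def k_def rGamma_inverse_Gamma by simp
  have scaled: "v * c - a - b = 2 * c * s3" "v * c + a + b = 2 * c * s5"
      "v * c - a + b = 2 * c * s4" "v * c + a - b = 2 * c * s6"
      and D: "w2^2 - w1^2 = - (a * b) / c^2"
    using assms(3) by (simp_all add: s3_def s4_def s5_def s6_def assms(6,7) field_simps power2_eq_square)
  have "k \<noteq> 0" using assms(5) by (simp add: k_def)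
  then have "s3 * s4 * s5 * s6 / (v * (w2^2 - w1^2)) * pfrac_closed_form w1 w2 v =
      (v * c - a - b) * (v * c + a + b) * (v * c - a + b) * (v * c + a - b) / (16 * v * a * b * c^2 * Gamma v) *
        (Gamma s5 * Gamma s3 * C1 / k - Gamma s6 * Gamma s4 * C2 / k)"
    unfolding scaled D closed using assms(1-4)
    by (cases "Gamma v = 0") (simp_all add: field_simps power2_eq_square)
  then show ?thesis
    by (simp add: s3_def s4_def s5_def s6_def C1_def C2_def k_def mult_ac)
qed

theorem mainTheorem2:
  fixes v a b c :: complex
  assumes "a \<noteq> 0" "b \<noteq> 0" "v \<noteq> 1" "Re v < 3" "Re c > 0"
    and "Re (v * c + a + b) > 0" "Re (v * c + a - b) > 0"
    and "Re (v * c - a + b) > 0" "Re (v * c - a - b) > 0"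
    and "v / 2 \<notin> \<int>\<^sub>\<le>\<^sub>0"
    and "1 + (v/2 - a/(2*c) - b/(2*c)) \<notin> \<int>\<^sub>\<le>\<^sub>0"
    and "1 + (v/2 - a/(2*c) + b/(2*c)) \<notin> \<int>\<^sub>\<le>\<^sub>0"
    and "1 + (v/2 + a/(2*c) + b/(2*c)) \<notin> \<int>\<^sub>\<le>\<^sub>0"
    and "1 + (v/2 + a/(2*c) - b/(2*c)) \<notin> \<int>\<^sub>\<le>\<^sub>0"
  shows "let s3 = v/2 - a/(2*c) - b/(2*c);
             s4 = v/2 - a/(2*c) + b/(2*c);
             s5 = v/2 + a/(2*c) + b/(2*c);
             s6 = v/2 + a/(2*c) - b/(2*c);
             P = (v * c - a - b) * (v * c + a + b) * (v * c - a + b) * (v * c + a - b);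
             as = [v, 1 + v/2, s3, s5, s4, s6];
             bs = [v/2, 1 + s3, 1 + s5, 1 + s4, 1 + s6]
         in summable (hyp_term as bs 1) \<and>
            hypergeom as bs 1 =
              P / (16 * v * a * b * c^2 * Gamma v) *
              (Gamma s5 * Gamma s3 * cos ((a + b) * of_real pi / (2*c)) / cos (v * of_real pi / 2)
               - Gamma s6 * Gamma s4 * cos ((a - b) * of_real pi / (2*c)) / cos (v * of_real pi / 2))"
proof -
  define w1 w2 where "w1 = (a + b) / (2 * c)" and "w2 = (a - b) / (2 * c)"
  have "c \<noteq> 0" "v \<noteq> 0" using assms(5,10) by auto
  have shifts: "v/2 - a/(2*c) - b/(2*c) = v/2 - w1" "v/2 + a/(2*c) + b/(2*c) = v/2 + w1"
      "v/2 - a/(2*c) + b/(2*c) = v/2 - w2" "v/2 + a/(2*c) - b/(2*c) = v/2 + w2"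
    by (simp_all add: w1_def w2_def add_divide_distrib diff_divide_distrib)
  have "2 * c * (v/2 - w1) = v * c - a - b" "2 * c * (v/2 + w1) = v * c + a + b"
      "2 * c * (v/2 - w2) = v * c - a + b" "2 * c * (v/2 + w2) = v * c + a - b"
    using \<open>c \<noteq> 0\<close> by (simp_all add: w1_def w2_def field_simps)
  then have pos: "Re (2 * c * (v/2 - w1)) > 0" "Re (2 * c * (v/2 + w1)) > 0"
      "Re (2 * c * (v/2 - w2)) > 0" "Re (2 * c * (v/2 + w2)) > 0"
    using assms(6-9) by simp_all
  have "0 < Re (2 * c)" using assms(5) by simp
  note nonpos = pos[THEN notin_nonpos_Ints_if_Re_mult_pos[OF this]]
  have "w2^2 \<noteq> w1^2"
    using assms(1,2) \<open>c \<noteq> 0\<close> by (simp add: w1_def w2_def field_simps power2_eq_square)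
  moreover have "cos (v * of_real pi / 2) \<noteq> 0"
    using assms(3-6,9) by (intro cos_pi_half_neq_0[of v c]) simp_all
  ultimately show ?thesis
    unfolding Let_def shifts
    using hypergeom_6F5_eq_closed_form[OF refl refl refl refl assms(10) nonpos] assms(4)
      pfrac_closed_form_rescaled[OF assms(1,2) \<open>c \<noteq> 0\<close> \<open>v \<noteq> 0\<close> _ w1_def w2_def]
    by (simp add: mult_ac)
qed

end
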